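(* Let $G=(g_{uv})_{1\le u,v\le m}$ be a symmetric complex matrix with units on the diagonal with $\mathrm{rank}\,G\le 2r$ for an integer $r$, let $0<\varkappa<1$, and suppose that for any $u,v\in[m]$ either $|g_{uv}-1|>\varkappa$ or $|g_{uv}-1|<2^{-4(r+1)}\varkappa$. Let $\mathcal K=\mathcal K(G,\varkappa)$ and let $\succ$ be any ordering of $\mathcal K$ produced by the construction in the context. Then for any two simplices $\sigma,\tau\in\mathcal K$ with $\dim\sigma=\dim\tau=r$ and $\mu(\sigma)=\mu(\tau)$, we have $\sigma\cup\tau\in\mathcal K$.
   Context: $[m]=\{1,\dots,m\}$; $\Gamma(G,\varkappa)$ is the graph on $[m]$ with $\{u,v\}$ an edge iff $|g_{uv}-1|<\varkappa$; $\mathcal K(G,\varkappa)$ is its clique complex; $\dim\sigma=|\sigma|-1$. For a strict total ordering $\succ$ of $\mathcal K$ and non-empty $\sigma$, $\mu(\sigma)$ is the $\succ$-largest facet of $\sigma$. Construction of $\succ$: simplices of larger dimension are larger; vertices are ordered arbitrarily; assuming $\succ$ is defined on $(s-1)$-simplices, for $s$-simplices put $\sigma\succ\tau$ if $\mu(\sigma)\succ\mu(\tau)$; for each $(s-1)$-simplex $\rho$, let $\mathbb V_\rho$ be the set of vertices $v\notin\rho$ with $\rho\cup\{v\}\in\mathcal K$ and $\mu(\rho\cup\{v\})=\rho$, $t=|\mathbb V_\rho|$; choose $v_1,\dots,v_t$ successively: for $j<t$, among pairs $w\ne z$ in $\mathbb V_\rho\setminus\{v_1,\dots,v_{j-1}\}$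 pick a pair $(w^0,z^0)$ maximizing $|g_{wz}-1|$ (ties broken arbitrarily) and set $v_j=w^0$; $v_t$ is the remaining vertex; then put $\rho\cup\{v_1\}\succ\dots\succ\rho\cup\{v_t\}$. *)

theory Defs
  imports "Jordan_Normal_Form.DL_Rank"
begin

text \<open>Vertices are indexed by {0..<m} (JNF matrices are 0-indexed); this is the
paper's [m] shifted by one. g_uv is G $$ (u,v).\<close>

definition adj :: "complex mat \<Rightarrow> real \<Rightarrow> nat \<Rightarrow> nat \<Rightarrow> bool" where
  "adj G \<kappa> u v \<longleftrightarrow> u \<noteq> v \<and> cmod (G $$ (u,v) - 1) < \<kappa>"

definition clique_complex :: "complex mat \<Rightarrow> real \<Rightarrow> nat set set" where
  "clique_complex G \<kappa> = {\<sigma>. \<sigma> \<noteq> {} \<and> \<sigma> \<subseteq> {0..<dim_row G} \<and>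
      (\<forall>u\<in>\<sigma>. \<forall>v\<in>\<sigma>. u \<noteq> v \<longrightarrow> adj G \<kappa> u v)}"

definition facets :: "nat set \<Rightarrow> nat set set" where
  "facets \<sigma> = {\<sigma> - {v} | v. v \<in> \<sigma>}"

definition mu :: "(nat set \<Rightarrow> nat set \<Rightarrow> bool) \<Rightarrow> nat set \<Rightarrow> nat set" where
  "mu succ \<sigma> = (THE \<rho>. \<rho> \<in> facets \<sigma> \<and> (\<forall>\<rho>'\<in>facets \<sigma>. \<rho>' \<noteq> \<rho> \<longrightarrow> succ \<rho> \<rho>'))"

definition strict_total_on :: "'a set \<Rightarrow> ('a \<Rightarrow> 'a \<Rightarrow> bool) \<Rightarrow> bool" where
  "strict_total_on A r \<longleftrightarrow>
     (\<forall>x y. r x y \<longrightarrow> x \<in> A \<and> y \<in> A) \<and>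
     (\<forall>x. \<not> r x x) \<and>
     (\<forall>x y z. r x y \<longrightarrow> r y z \<longrightarrow> r x z) \<and>
     (\<forall>x\<in>A. \<forall>y\<in>A. x \<noteq> y \<longrightarrow> r x y \<or> r y x)"

definition Vset :: "complex mat \<Rightarrow> real \<Rightarrow> (nat set \<Rightarrow> nat set \<Rightarrow> bool) \<Rightarrow> nat set \<Rightarrow> nat set" where
  "Vset G \<kappa> succ \<rho> = {v. v \<notin> \<rho> \<and> insert v \<rho> \<in> clique_complex G \<kappa> \<and> mu succ (insert v \<rho>) = \<rho>}"

text \<open>A list vs = [v_1,...,v_t] (0-indexed) is a valid greedy choice for V: it enumerates V
without repetition, and for every j < t-1 (i.e. every step except the last), there is a
z in the remaining set R_j = V - {v_1..v_(j-1)}, z different from v_j, such that the pair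
(v_j, z) maximizes |g_wz - 1| among pairs of distinct elements of R_j.\<close>
definition greedy_seq :: "complex mat \<Rightarrow> nat set \<Rightarrow> nat list \<Rightarrow> bool" where
  "greedy_seq G V vs \<longleftrightarrow> distinct vs \<and> set vs = V \<and>
     (\<forall>j. j + 1 < length vs \<longrightarrow>
        (let R = V - set (take j vs) in
          \<exists>z\<in>R. z \<noteq> vs ! j \<and>
            (\<forall>w\<in>R. \<forall>z'\<in>R. w \<noteq> z' \<longrightarrow> cmod (G $$ (w,z') - 1) \<le> cmod (G $$ (vs ! j, z) - 1))))"

definition constructed_order :: "complex mat \<Rightarrow> real \<Rightarrow> (nat set \<Rightarrow> nat set \<Rightarrow> bool) \<Rightarrow> bool" where
  "constructed_order G \<kappa> succ \<longleftrightarrow>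
     (let K = clique_complex G \<kappa> in
     strict_total_on K succ \<and>
     \<comment> \<open>simplices of larger dimension are larger\<close>
     (\<forall>\<sigma>\<in>K. \<forall>\<tau>\<in>K. card \<sigma> > card \<tau> \<longrightarrow> succ \<sigma> \<tau>) \<and>
     \<comment> \<open>for s-simplices, s >= 1: mu(sigma) > mu(tau) implies sigma > tau\<close>
     (\<forall>\<sigma>\<in>K. \<forall>\<tau>\<in>K. card \<sigma> = card \<tau> \<longrightarrow> card \<sigma> \<ge> 2 \<longrightarrow>
         succ (mu succ \<sigma>) (mu succ \<tau>) \<longrightarrow> succ \<sigma> \<tau>) \<and>
     \<comment> \<open>ties (same mu = rho) are broken by the greedy sequence\<close>
     (\<forall>\<rho>\<in>K. \<exists>vs. greedy_seq G (Vset G \<kappa> succ \<rho>) vs \<and>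
         (\<forall>i j. i < j \<longrightarrow> j < length vs \<longrightarrow> succ (insert (vs ! i) \<rho>) (insert (vs ! j) \<rho>))))"

end

theory Submission
  imports Defs
begin

text \<open>Write \<sigma> = \<rho> \<union> {v} and \<tau> = \<rho> \<union> {w} with \<rho> = \<mu>(\<sigma>) = \<mu>(\<tau>), and suppose that v and w
  are not adjacent. Enumerate \<rho> = {x_1, ..., x_r} so that \<mu> successively removes x_r, x_(r-1), ...
  Then v and w belong to every V_{x_1..x_j}, and the greedy choice in V_{x_1..x_(k-1)} provides for
  each k \<ge> 2 a partner z_k of x_k whose distance |g - 1| from x_k is at least \<kappa> and dominates
  all distances among the vertices placed below x_k. On the 2r+1 distinct vertices x_i, z_k, v, w the
  matrix G - 1 is tiny except for a triangular pattern of such dominant entries, and bootstrapping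
  along that pattern shows that G restricted to these vertices has trivial kernel. So the rank of G
  is at least 2r+1.\<close>

section \<open>Elementary estimates\<close>

lemma sum_Un_le:
  fixes f :: "'a \<Rightarrow> real"
  assumes "finite A" "finite B" "\<And>b. b \<in> A \<inter> B \<Longrightarrow> 0 \<le> f b"
  shows "sum f (A \<union> B) \<le> sum f A + sum f B"
proof -
  have "0 \<le> sum f (A \<inter> B)" using assms(3) by (rule sum_nonneg)
  then show ?thesis using sum.union_inter[OF assms(1,2), of f] by linarith
qed

lemma sum_le_pow2_if_le_sum_below:
  fixes y :: "'a::linorder \<Rightarrow> real"
  assumes "finite I" "\<And>k. k \<in> I \<Longrightarrow> y k \<le> A + (\<Sum>l\<in>{l\<in>I. l < k}. y l)"
  shows "(\<Sum>k\<in>I. y k) \<le> (2 ^ card I - 1) * A"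
  using assms
proof (induction I rule: finite_linorder_max_induct)
  case empty
  then show ?case by simp
next
  case (insert b I)
  have "{l \<in> insert b I. l < k} = {l \<in> I. l < k}" if "k \<in> I" for k
    using insert.hyps that by auto
  then have IH: "(\<Sum>k\<in>I. y k) \<le> (2 ^ card I - 1) * A"
    using insert.prems by (intro insert.IH) force
  have "{l \<in> insert b I. l < b} = I" using insert.hyps by auto
  then have "y b \<le> A + (\<Sum>l\<in>I. y l)" using insert.prems[of b] by simp
  moreover have "b \<notin> I" using insert.hyps by auto
  ultimately show ?case using IH insert.hyps(1) by (simp add: algebra_simps)
qed

lemma sum_le_pow2_if_le_sum_above:
  fixes y :: "'a::linorder \<Rightarrow> real"
  assumes "finite I" "\<And>k. k \<in> I \<Longrightarrow> y k \<le> A + (\<Sum>l\<in>{l\<in>I. k < l}. y l)"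
  shows "(\<Sum>k\<in>I. y k) \<le> (2 ^ card I - 1) * A"
  using assms
proof (induction I rule: finite_linorder_min_induct)
  case empty
  then show ?case by simp
next
  case (insert b I)
  have "{l \<in> insert b I. k < l} = {l \<in> I. k < l}" if "k \<in> I" for k
    using insert.hyps that by auto
  then have IH: "(\<Sum>k\<in>I. y k) \<le> (2 ^ card I - 1) * A"
    using insert.prems by (intro insert.IH) force
  have "{l \<in> insert b I. b < l} = I" using insert.hyps by auto
  then have "y b \<le> A + (\<Sum>l\<in>I. y l)" using insert.prems[of b] by simp
  moreover have "b \<notin> I" using insert.hyps by auto
  ultimately show ?case using IH insert.hyps(1) by (simp add: algebra_simps)
qed

lemma norm_pivot_mult_le:
  fixes e c :: "'a \<Rightarrow> complex"
  assumes "finite T" "b\<^sub>0 \<in> T" "cmod (\<Sum>b\<in>T. e b * c b) \<le> \<eta>"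
    and "\<And>b. b \<in> T - {b\<^sub>0} \<Longrightarrow> cmod (e b) * cmod (c b) \<le> \<omega> b"
  shows "cmod (e b\<^sub>0) * cmod (c b\<^sub>0) \<le> \<eta> + (\<Sum>b\<in>T - {b\<^sub>0}. \<omega> b)"
proof -
  have "cmod (e b\<^sub>0 * c b\<^sub>0) \<le> cmod (\<Sum>b\<in>T. e b * c b) + cmod (\<Sum>b\<in>T - {b\<^sub>0}. e b * c b)"
    using norm_triangle_ineq4[of "\<Sum>b\<in>T. e b * c b" "\<Sum>b\<in>T - {b\<^sub>0}. e b * c b"] assms(1,2)
    by (simp add: sum.remove)
  also have "cmod (\<Sum>b\<in>T - {b\<^sub>0}. e b * c b) \<le> (\<Sum>b\<in>T - {b\<^sub>0}. cmod (e b) * cmod (c b))"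
    by (rule order.trans[OF norm_sum]) (simp add: norm_mult)
  also have "\<dots> \<le> (\<Sum>b\<in>T - {b\<^sub>0}. \<omega> b)"
    using assms(4) by (rule sum_mono)
  finally show ?thesis using assms(3) by (simp add: norm_mult)
qed

lemma norm_pivot_le:
  fixes e c :: "'a \<Rightarrow> complex" and p :: "'i \<Rightarrow> 'a" and \<beta> :: "'i \<Rightarrow> real"
  assumes T: "finite T" "b\<^sub>0 \<in> T" "S \<subseteq> T" and L: "finite L" "\<And>l. l \<in> L \<Longrightarrow> 0 \<le> \<beta> l"
    and \<delta>: "0 \<le> \<delta>" and M: "0 \<le> M" and residual: "cmod (\<Sum>b\<in>T. e b * c b) \<le> \<eta>"
    and entries: "\<And>b. b \<in> T - {b\<^sub>0} \<Longrightarrow> cmod (e b) \<le> \<delta> \<or> (b \<in> S \<and> cmod (e b) \<le> M) \<or>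
                     (\<exists>l\<in>L. b = p l \<and> cmod (e b) \<le> \<beta> l)"
  shows "cmod (e b\<^sub>0) * cmod (c b\<^sub>0) \<le> \<eta> + \<delta> * (\<Sum>b\<in>T. cmod (c b))
           + M * (\<Sum>b\<in>S. cmod (c b)) + (\<Sum>l\<in>L. \<beta> l * cmod (c (p l)))"
proof -
  define exc where "exc b = (\<Sum>l\<in>L. if p l = b then \<beta> l * cmod (c (p l)) else 0)" for b
  define \<omega> where "\<omega> b = \<delta> * cmod (c b) + (if b \<in> S then M * cmod (c b) else 0) + exc b" for b
  have exc_nonneg: "0 \<le> exc b" for b
    unfolding exc_def using L(2) by (intro sum_nonneg) auto
  have "cmod (e b) * cmod (c b) \<le> \<omega> b" if b: "b \<in> T - {b\<^sub>0}" for b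
  proof -
    have "0 \<le> \<delta> * cmod (c b)" "0 \<le> (if b \<in> S then M * cmod (c b) else 0)" using \<delta> M by simp_all
    moreover consider "cmod (e b) \<le> \<delta>" | "b \<in> S" "cmod (e b) \<le> M"
      | l where "l \<in> L" "b = p l" "cmod (e b) \<le> \<beta> l"
      using entries[OF b] by blast
    then have "cmod (e b) * cmod (c b) \<le> \<delta> * cmod (c b) \<or>
        cmod (e b) * cmod (c b) \<le> (if b \<in> S then M * cmod (c b) else 0) \<or> cmod (e b) * cmod (c b) \<le> exc b"
    proof cases
      case 3
      have "cmod (e b) * cmod (c b) \<le> (if p l = b then \<beta> l * cmod (c (p l)) else 0)"
        using 3 by (simp add: mult_right_mono)
      also have "\<dots> \<le> exc b"
        unfolding exc_def using 3 L by (intro member_le_sum) auto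
      finally show ?thesis by simp
    qed (simp_all add: mult_right_mono)
    ultimately show ?thesis using exc_nonneg[of b] unfolding \<omega>_def by linarith
  qed
  then have "cmod (e b\<^sub>0) * cmod (c b\<^sub>0) \<le> \<eta> + (\<Sum>b\<in>T - {b\<^sub>0}. \<omega> b)"
    by (rule norm_pivot_mult_le[OF T(1,2) residual])
  also have "(\<Sum>b\<in>T - {b\<^sub>0}. \<omega> b) \<le> (\<Sum>b\<in>T. \<omega> b)"
    using T exc_nonneg \<delta> M unfolding \<omega>_def by (intro sum_mono2) auto
  also have "\<dots> = \<delta> * (\<Sum>b\<in>T. cmod (c b)) + M * (\<Sum>b\<in>S. cmod (c b)) + (\<Sum>b\<in>T. exc b)"
    using T unfolding \<omega>_def
    by (simp add: sum.distrib sum_distrib_left sum.inter_restrict[symmetric] Int_absorb1)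
  also have "(\<Sum>b\<in>T. exc b) \<le> (\<Sum>l\<in>L. \<beta> l * cmod (c (p l)))"
    unfolding exc_def using T(1) L(2) by (subst sum.swap) (auto simp: sum.delta intro!: sum_mono)
  finally show ?thesis by simp
qed

section \<open>Kernel vectors of matrices of small rank\<close>

lemma kernel_vector_of_equal_columns:
  fixes G :: "complex mat"
  assumes G: "G \<in> carrier_mat m n" and T: "T \<subseteq> {..<n}"
    and b: "b\<^sub>1 \<in> T" "b\<^sub>2 \<in> T" "b\<^sub>1 \<noteq> b\<^sub>2" "col G b\<^sub>1 = col G b\<^sub>2"
  obtains c where "\<exists>b\<in>T. c b \<noteq> 0" "\<And>a. a < m \<Longrightarrow> (\<Sum>b\<in>T. G $$ (a, b) * c b) = 0"
proof -
  define c :: "nat \<Rightarrow> complex" where "c b = (if b = b\<^sub>1 then 1 else 0) - (if b = b\<^sub>2 then 1 else 0)" for b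
  have fin: "finite T" using T by (rule finite_subset) simp
  have "(\<Sum>b\<in>T. G $$ (a, b) * c b) = 0" if a: "a < m" for a
  proof -
    have "b\<^sub>1 < n" "b\<^sub>2 < n" using b(1,2) T by auto
    then have "G $$ (a, b\<^sub>1) = G $$ (a, b\<^sub>2)"
      using arg_cong[OF b(4), of "\<lambda>u. u $ a"] a G by simp
    moreover have "(\<Sum>b\<in>T. G $$ (a, b) * c b) = G $$ (a, b\<^sub>1) - G $$ (a, b\<^sub>2)"
      using fin b(1,2) by (simp add: c_def right_diff_distrib sum_subtractf if_distrib[of "(*) _"] cong: if_cong)
    ultimately show ?thesis by simp
  qed
  moreover have "c b\<^sub>1 \<noteq> 0" using b(3) by (simp add: c_def)
  ultimately show ?thesis using b(1) that by blast
qed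

lemma rank_lt_card_imp_kernel_vector:
  fixes G :: "complex mat"
  assumes G: "G \<in> carrier_mat m n" and T: "T \<subseteq> {..<n}" and rank: "vec_space.rank m G < card T"
  obtains c where "\<exists>b\<in>T. c b \<noteq> 0" "\<And>a. a < m \<Longrightarrow> (\<Sum>b\<in>T. G $$ (a, b) * c b) = 0"
proof (cases "inj_on (col G) T")
  case False
  then obtain b\<^sub>1 b\<^sub>2 where "b\<^sub>1 \<in> T" "b\<^sub>2 \<in> T" "b\<^sub>1 \<noteq> b\<^sub>2" "col G b\<^sub>1 = col G b\<^sub>2"
    unfolding inj_on_def by blast
  from kernel_vector_of_equal_columns[OF G T this] that show ?thesis by blast
next
  case True
  interpret vec_space "TYPE(complex)" m .
  define U where "U = col G ` T"
  have U: "U \<subseteq> set (cols G)" "U \<subseteq> carrier_vec m" "finite U"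
    using T G finite_subset[OF T] unfolding U_def by (auto simp: cols_def)
  have "\<not> lin_indpt U"
    using rank_ge_card_indpt[OF G U(1)] card_image[OF True] rank unfolding U_def by auto
  then obtain f u where f: "lincomb f U = 0\<^sub>v m" "u \<in> U" "f u \<noteq> 0"
    using finite_lin_dep[OF U(3)] U(2) by blast
  define c where "c b = f (col G b)" for b
  have "(\<Sum>b\<in>T. G $$ (a, b) * c b) = 0" if a: "a < m" for a
  proof -
    have "0 = lincomb f U $ a" using f(1) a by simp
    also have "\<dots> = (\<Sum>u\<in>U. f u * u $ a)" by (rule lincomb_index[OF a U(2)])
    also have "\<dots> = (\<Sum>b\<in>T. f (col G b) * col G b $ a)"
      unfolding U_def by (rule sum.reindex[OF True, unfolded comp_def])
    also have "\<dots> = (\<Sum>b\<in>T. G $$ (a, b) * c b)"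
      using T G a by (intro sum.cong) (auto simp: c_def)
    finally show ?thesis by simp
  qed
  moreover obtain b where "b \<in> T" "u = col G b" using f(2) U_def by blast
  then have "c b \<noteq> 0" using f(3) by (simp add: c_def)
  ultimately show ?thesis using \<open>b \<in> T\<close> that by blast
qed

lemma rank_pos_if_diag_one:
  fixes G :: "complex mat"
  assumes "G \<in> carrier_mat m n" "a < m" "a < n" "G $$ (a, a) = 1"
  shows "0 < vec_space.rank m G"
proof (rule ccontr)
  assume "\<not> 0 < vec_space.rank m G"
  then have "vec_space.rank m G < card {a}" by simp
  then obtain c where "\<exists>b\<in>{a}. c b \<noteq> 0" "\<And>a'. a' < m \<Longrightarrow> (\<Sum>b\<in>{a}. G $$ (a', b) * c b) = 0"
    using rank_lt_card_imp_kernel_vector[OF assms(1)] assms(3) by blast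
  then show False using assms(2,4) by force
qed

section \<open>Matrices with a dominant pivot pattern\<close>

definition pivot_vertices :: "(nat \<Rightarrow> nat) \<Rightarrow> (nat \<Rightarrow> nat) \<Rightarrow> nat \<Rightarrow> nat \<Rightarrow> nat \<Rightarrow> nat set" where
  "pivot_vertices x z v w r = x ` {1..r} \<union> z ` {2..r} \<union> {v, w}"

lemma pivot_verticesE:
  assumes "b \<in> pivot_vertices x z v w r"
  obtains j where "j \<in> {1..r}" "b = x j" | l where "l \<in> {2..r}" "b = z l" | "b = v" | "b = w"
  using assms unfolding pivot_vertices_def by blast

text \<open>The entries g - 1 on the vertices x_1..x_r, z_2..z_r, v, w: the pivots (x_k, z_k),
  (z_k, x_k), (v, w), (w, v) are at least \<kappa>; every other entry of the listed rows is at most \<delta>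
  unless its column comes earlier in the order z_2, ..., z_r, v, w, x_r, ..., x_2, where it is
  bounded by a pivot; row x_1 is small throughout.\<close>

locale pivot_pattern =
  fixes g :: "nat \<Rightarrow> nat \<Rightarrow> complex" and x z :: "nat \<Rightarrow> nat" and v w :: nat
    and D :: "nat \<Rightarrow> real" and \<kappa> \<delta> :: real and r :: nat
  assumes r: "1 \<le> r" and \<kappa>: "0 < \<kappa>" "\<kappa> \<le> 1" and \<delta>: "0 \<le> \<delta>" "\<delta> * 2 ^ (4 * r + 4) \<le> \<kappa>"
    and pivot_vw: "\<kappa> \<le> cmod (g v w - 1)" "\<kappa> \<le> cmod (g w v - 1)"
    and pivot_xz: "\<And>k. k \<in> {2..r} \<Longrightarrow>
      \<kappa> \<le> D k \<and> D k \<le> cmod (g (x k) (z k) - 1) \<and> D k \<le> cmod (g (z k) (x k) - 1)"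
    and row_x1: "\<And>b. b \<in> pivot_vertices x z v w r \<Longrightarrow> cmod (g (x 1) b - 1) \<le> \<delta>"
    and row_x: "\<And>k b. k \<in> {2..r} \<Longrightarrow> b \<in> pivot_vertices x z v w r - {z k} \<Longrightarrow>
      cmod (g (x k) b - 1) \<le> \<delta> \<or> (\<exists>l\<in>{2..<k}. b = z l \<and> cmod (g (x k) b - 1) \<le> D l)"
    and row_v: "\<And>b. b \<in> pivot_vertices x z v w r - {w} \<Longrightarrow>
      cmod (g v b - 1) \<le> \<delta> \<or> (\<exists>l\<in>{2..r}. b = z l \<and> cmod (g v b - 1) \<le> D l)"
    and row_w: "\<And>b. b \<in> pivot_vertices x z v w r - {v} \<Longrightarrow>
      cmod (g w b - 1) \<le> \<delta> \<or> (\<exists>l\<in>{2..r}. b = z l \<and> cmod (g w b - 1) \<le> D l)"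
    and row_z: "\<And>k b. k \<in> {2..r} \<Longrightarrow> b \<in> pivot_vertices x z v w r - {x k} \<Longrightarrow>
      cmod (g (z k) b - 1) \<le> \<delta> \<or>
      (b \<in> x ` {k<..r} \<union> z ` {k<..r} \<union> {v, w} \<and> cmod (g (z k) b - 1) \<le> D k) \<or>
      (\<exists>l\<in>{2..<k}. b = z l \<and> cmod (g (z k) b - 1) \<le> D l)"
begin

abbreviation "T \<equiv> pivot_vertices x z v w r"

lemma finite_T: "finite T"
  by (simp add: pivot_vertices_def)

lemma T_memI: "j \<in> {1..r} \<Longrightarrow> x j \<in> T" "l \<in> {2..r} \<Longrightarrow> z l \<in> T" "v \<in> T" "w \<in> T"
  by (auto simp: pivot_vertices_def)

lemma D_pos: "k \<in> {2..r} \<Longrightarrow> 0 < D k"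
  using pivot_xz \<kappa>(1) by force

context
  fixes c :: "nat \<Rightarrow> complex"
  assumes kernel: "\<And>a. a \<in> T \<Longrightarrow> (\<Sum>b\<in>T. g a b * c b) = 0"
begin

definition mass where "mass = (\<Sum>b\<in>T. cmod (c b))"
definition x_mass where "x_mass = (\<Sum>k\<in>{2..r}. cmod (c (x k)))"
definition z_mass where "z_mass = (\<Sum>l\<in>{2..r}. cmod (c (z l)))"
definition z_weighted_mass where "z_weighted_mass = (\<Sum>l\<in>{2..r}. D l * cmod (c (z l)))"

lemma mass_nonneg: "0 \<le> mass"
  unfolding mass_def by (simp add: sum_nonneg)

lemma z_weighted_term_nonneg: "l \<in> {2..r} \<Longrightarrow> 0 \<le> D l * cmod (c (z l))"
  using D_pos[of l] by simp

lemma z_weighted_mass_nonneg: "0 \<le> z_weighted_mass"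
  unfolding z_weighted_mass_def using z_weighted_term_nonneg by (rule sum_nonneg)

lemma kappa_z_mass_le: "\<kappa> * z_mass \<le> z_weighted_mass"
  unfolding z_mass_def z_weighted_mass_def sum_distrib_left using pivot_xz
  by (intro sum_mono mult_right_mono) auto

lemma row_residual: "a \<in> T \<Longrightarrow> (\<Sum>b\<in>T. (g a b - 1) * c b) = - (\<Sum>b\<in>T. c b)"
  using kernel[of a] by (simp add: algebra_simps sum_subtractf)

lemma norm_sum_le: "cmod (\<Sum>b\<in>T. c b) \<le> \<delta> * mass"
proof -
  have "cmod (\<Sum>b\<in>T. c b) = cmod (\<Sum>b\<in>T. (g (x 1) b - 1) * c b)"
    using row_residual[OF T_memI(1)] r by simp
  also have "\<dots> \<le> (\<Sum>b\<in>T. cmod (g (x 1) b - 1) * cmod (c b))"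
    by (rule order.trans[OF norm_sum]) (simp add: norm_mult)
  also have "\<dots> \<le> (\<Sum>b\<in>T. \<delta> * cmod (c b))"
    using row_x1 by (intro sum_mono mult_right_mono) auto
  finally show ?thesis by (simp add: mass_def sum_distrib_left)
qed

lemma pivot_row_le:
  assumes "a \<in> T" "b \<in> T" "S \<subseteq> T" "L \<subseteq> {2..r}" "0 \<le> M"
    and "\<And>b'. b' \<in> T - {b} \<Longrightarrow> cmod (g a b' - 1) \<le> \<delta> \<or> (b' \<in> S \<and> cmod (g a b' - 1) \<le> M) \<or>
      (\<exists>l\<in>L. b' = z l \<and> cmod (g a b' - 1) \<le> D l)"
  shows "cmod (g a b - 1) * cmod (c b) \<le>
    2 * \<delta> * mass + M * (\<Sum>b\<in>S. cmod (c b)) + (\<Sum>l\<in>L. D l * cmod (c (z l)))"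
proof -
  have "cmod (\<Sum>b\<in>T. (g a b - 1) * c b) \<le> \<delta> * mass"
    using norm_sum_le by (simp add: row_residual[OF assms(1)])
  from norm_pivot_le[OF finite_T assms(2,3) finite_subset[OF assms(4)] _ \<delta>(1) assms(5) this assms(6)]
  show ?thesis using assms(4) D_pos by (force simp: mass_def less_imp_le)
qed

lemma z_weighted_mass_le: "z_weighted_mass \<le> 2 ^ r * \<delta> * mass"
proof -
  have "D k * cmod (c (z k)) \<le> 2 * \<delta> * mass + (\<Sum>l\<in>{l\<in>{2..r}. l < k}. D l * cmod (c (z l)))"
    if k: "k \<in> {2..r}" for k
  proof -
    have "{l\<in>{2..r}. l < k} = {2..<k}" using k by auto
    moreover have "D k * cmod (c (z k)) \<le> cmod (g (x k) (z k) - 1) * cmod (c (z k))"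
      using pivot_xz[OF k] by (simp add: mult_right_mono)
    moreover have "cmod (g (x k) (z k) - 1) * cmod (c (z k)) \<le>
        2 * \<delta> * mass + 0 * (\<Sum>b\<in>{}. cmod (c b)) + (\<Sum>l\<in>{2..<k}. D l * cmod (c (z l)))"
      using k row_x[OF k] by (intro pivot_row_le T_memI) auto
    ultimately show ?thesis by simp
  qed
  then have "z_weighted_mass \<le> (2 ^ card {2..r} - 1) * (2 * \<delta> * mass)"
    unfolding z_weighted_mass_def by (intro sum_le_pow2_if_le_sum_below) auto
  also have "\<dots> \<le> 2 ^ card {2..r} * (2 * \<delta> * mass)"
    using \<delta>(1) mass_nonneg by (intro mult_right_mono) auto
  also have "\<dots> = 2 ^ r * \<delta> * mass"
    using r by (cases r) simp_all
  finally show ?thesis .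
qed

lemma kappa_apex_mass_le:
  "\<kappa> * cmod (c w) \<le> 2 * \<delta> * mass + z_weighted_mass" "\<kappa> * cmod (c v) \<le> 2 * \<delta> * mass + z_weighted_mass"
proof -
  have "\<kappa> * cmod (c w) \<le> cmod (g v w - 1) * cmod (c w)"
    using pivot_vw(1) by (simp add: mult_right_mono)
  also have "\<dots> \<le> 2 * \<delta> * mass + 0 * (\<Sum>b\<in>{}. cmod (c b)) + z_weighted_mass"
    unfolding z_weighted_mass_def using row_v by (intro pivot_row_le T_memI) auto
  finally show "\<kappa> * cmod (c w) \<le> 2 * \<delta> * mass + z_weighted_mass" by simp
  have "\<kappa> * cmod (c v) \<le> cmod (g w v - 1) * cmod (c v)"
    using pivot_vw(2) by (simp add: mult_right_mono)
  also have "\<dots> \<le> 2 * \<delta> * mass + 0 * (\<Sum>b\<in>{}. cmod (c b)) + z_weighted_mass"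
    unfolding z_weighted_mass_def using row_w by (intro pivot_row_le T_memI) auto
  finally show "\<kappa> * cmod (c v) \<le> 2 * \<delta> * mass + z_weighted_mass" by simp
qed

lemma sum_image_apex_le:
  assumes "I \<subseteq> {2..r}" "J \<subseteq> {2..r}"
  shows "(\<Sum>b\<in>x ` I \<union> z ` J \<union> {v, w}. cmod (c b)) \<le>
    (\<Sum>j\<in>I. cmod (c (x j))) + z_mass + cmod (c v) + cmod (c w)"
proof -
  have "finite I" "finite J" using assms finite_subset by auto
  then have "(\<Sum>b\<in>x ` I \<union> z ` J \<union> {v, w}. cmod (c b)) \<le>
      (\<Sum>b\<in>x ` I. cmod (c b)) + (\<Sum>b\<in>z ` J. cmod (c b)) + (\<Sum>b\<in>{v, w}. cmod (c b))"
    by (intro order.trans[OF sum_Un_le] add_mono sum_Un_le) auto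
  also have "(\<Sum>b\<in>x ` I. cmod (c b)) \<le> (\<Sum>j\<in>I. cmod (c (x j)))"
    using sum_image_le[OF \<open>finite I\<close>, of "\<lambda>b. cmod (c b)" x] by (simp add: comp_def)
  also have "(\<Sum>b\<in>z ` J. cmod (c b)) \<le> (\<Sum>l\<in>J. cmod (c (z l)))"
    using sum_image_le[OF \<open>finite J\<close>, of "\<lambda>b. cmod (c b)" z] by (simp add: comp_def)
  also have "\<dots> \<le> z_mass"
    unfolding z_mass_def using assms(2) by (intro sum_mono2) auto
  also have "(\<Sum>b\<in>{v, w}. cmod (c b)) \<le> cmod (c v) + cmod (c w)"
    by (cases "v = w") simp_all
  finally show ?thesis by simp
qed

definition x_offset where
  "x_offset = (2 * \<delta> * mass + z_weighted_mass) / \<kappa> + z_mass + cmod (c v) + cmod (c w)"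

lemma x_mass_le: "x_mass \<le> (2 ^ (r - 1) - 1) * x_offset"
proof -
  have "cmod (c (x k)) \<le> x_offset + (\<Sum>j\<in>{j\<in>{2..r}. k < j}. cmod (c (x j)))"
    if k: "k \<in> {2..r}" for k
  proof -
    define S where "S = x ` {k<..r} \<union> z ` {k<..r} \<union> {v, w}"
    have above: "{j\<in>{2..r}. k < j} = {k<..r}" using k by auto
    have "D k * cmod (c (x k)) \<le> cmod (g (z k) (x k) - 1) * cmod (c (x k))"
      using pivot_xz[OF k] by (simp add: mult_right_mono)
    also have "\<dots> \<le> 2 * \<delta> * mass + D k * (\<Sum>b\<in>S. cmod (c b)) + (\<Sum>l\<in>{2..<k}. D l * cmod (c (z l)))"
      using k row_z[OF k] D_pos[OF k] unfolding S_def
      by (intro pivot_row_le T_memI) (auto simp: pivot_vertices_def)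
    also have "(\<Sum>l\<in>{2..<k}. D l * cmod (c (z l))) \<le> z_weighted_mass"
      unfolding z_weighted_mass_def using k z_weighted_term_nonneg by (intro sum_mono2) auto
    also have "(\<Sum>b\<in>S. cmod (c b)) \<le> (\<Sum>j\<in>{k<..r}. cmod (c (x j))) + z_mass + cmod (c v) + cmod (c w)"
      unfolding S_def using k by (intro sum_image_apex_le) auto
    finally have "D k * cmod (c (x k)) \<le> (2 * \<delta> * mass + z_weighted_mass)
        + D k * ((\<Sum>j\<in>{k<..r}. cmod (c (x j))) + z_mass + cmod (c v) + cmod (c w))"
      using D_pos[OF k] by (simp add: mult_left_mono)
    then have "cmod (c (x k)) \<le> (2 * \<delta> * mass + z_weighted_mass) / D k
        + ((\<Sum>j\<in>{k<..r}. cmod (c (x j))) + z_mass + cmod (c v) + cmod (c w))"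
      using D_pos[OF k] by (simp add: field_simps)
    moreover have "(2 * \<delta> * mass + z_weighted_mass) / D k \<le> (2 * \<delta> * mass + z_weighted_mass) / \<kappa>"
      using pivot_xz[OF k] \<kappa>(1) \<delta>(1) mass_nonneg z_weighted_mass_nonneg by (intro divide_left_mono) auto
    ultimately show ?thesis unfolding above x_offset_def by linarith
  qed
  then have "x_mass \<le> (2 ^ card {2..r} - 1) * x_offset"
    unfolding x_mass_def by (intro sum_le_pow2_if_le_sum_above) auto
  then show ?thesis by simp
qed

lemma kappa_x_offset_le: "\<kappa> * x_offset \<le> 14 * (2 ^ (r - 1) * (\<delta> * mass))"
proof -
  have two_pow: "(2::real) ^ r = 2 * 2 ^ (r - 1)" using r by (cases r) simp_all
  have "\<kappa> * x_offset = 2 * \<delta> * mass + z_weighted_mass + \<kappa> * z_mass + \<kappa> * cmod (c v) + \<kappa> * cmod (c w)"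
    unfolding x_offset_def using \<kappa>(1) by (simp add: field_simps)
  also have "\<dots> \<le> 6 * (\<delta> * mass) + 4 * z_weighted_mass"
    using kappa_z_mass_le kappa_apex_mass_le by linarith
  also have "\<dots> \<le> 6 * (\<delta> * mass) + 8 * (2 ^ (r - 1) * (\<delta> * mass))"
    using z_weighted_mass_le unfolding two_pow by (simp add: algebra_simps)
  also have "\<dots> \<le> 14 * (2 ^ (r - 1) * (\<delta> * mass))"
  proof -
    have "1 * (\<delta> * mass) \<le> 2 ^ (r - 1) * (\<delta> * mass)"
      using \<delta>(1) mass_nonneg by (intro mult_right_mono) auto
    then show ?thesis by linarith
  qed
  finally show ?thesis .
qed

lemma mass_le: "mass \<le> \<delta> * mass + 2 * (x_mass + z_mass + cmod (c v) + cmod (c w))"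
proof -
  define rest where "rest = (\<Sum>b\<in>T - {x 1}. cmod (c b))"
  have x1: "x 1 \<in> T" using T_memI(1) r by simp
  have "cmod (c (x 1)) \<le> cmod (\<Sum>b\<in>T. c b) + cmod (\<Sum>b\<in>T - {x 1}. c b)"
    using norm_triangle_ineq4[of "\<Sum>b\<in>T. c b" "\<Sum>b\<in>T - {x 1}. c b"] finite_T x1
    by (simp add: sum.remove)
  also have "cmod (\<Sum>b\<in>T - {x 1}. c b) \<le> rest" unfolding rest_def by (rule norm_sum)
  finally have mass_rest: "mass \<le> \<delta> * mass + 2 * rest"
    using norm_sum_le finite_T x1 unfolding mass_def rest_def by (simp add: sum.remove)
  have "{1..r} = insert 1 {2..r}" using r by auto
  then have "T - {x 1} \<subseteq> x ` {2..r} \<union> z ` {2..r} \<union> {v, w}"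
    unfolding pivot_vertices_def by auto
  then have "rest \<le> (\<Sum>b\<in>x ` {2..r} \<union> z ` {2..r} \<union> {v, w}. cmod (c b))"
    unfolding rest_def by (intro sum_mono2) auto
  also have "\<dots> \<le> x_mass + z_mass + cmod (c v) + cmod (c w)"
    unfolding x_mass_def by (rule sum_image_apex_le) auto
  finally have "\<delta> * mass + 2 * rest \<le> \<delta> * mass + 2 * (x_mass + z_mass + cmod (c v) + cmod (c w))"
    by simp
  with mass_rest show ?thesis by (rule order.trans)
qed

text \<open>With s = 2^(r-1) the bounds above give \<kappa> * mass \<le> 29 s^2 \<delta> * mass, while the
  hypothesis on \<delta> makes 29 s^2 \<delta> smaller than \<kappa>.\<close>

lemma mass_eq_0: "mass = 0"
proof -
  define s :: real where "s = 2 ^ (r - 1)"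
  have s: "1 \<le> s" unfolding s_def by simp
  have "(2::real) ^ (4 * r + 4) = 256 * s ^ 4"
    unfolding s_def using r by (cases r) (simp_all add: power_mult[symmetric] power_add mult.commute)
  then have \<delta>s: "256 * s ^ 4 * \<delta> \<le> \<kappa>" using \<delta>(2) by (simp add: mult.commute)
  have \<delta>_mass: "0 \<le> \<delta> * mass" using \<delta>(1) mass_nonneg by simp
  have "z_mass + cmod (c v) + cmod (c w) \<le> x_offset"
    unfolding x_offset_def using \<kappa>(1) \<delta>_mass z_weighted_mass_nonneg by simp
  then have "mass \<le> \<delta> * mass + 2 * (s * x_offset)"
    using mass_le x_mass_le unfolding s_def by (simp add: algebra_simps)
  then have "\<kappa> * mass \<le> \<kappa> * (\<delta> * mass + 2 * (s * x_offset))" using \<kappa>(1) by (intro mult_left_mono) auto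
  also have "\<dots> = \<kappa> * (\<delta> * mass) + 2 * s * (\<kappa> * x_offset)" by (simp add: algebra_simps)
  also have "\<dots> \<le> s ^ 2 * (\<delta> * mass) + 2 * s * (14 * (s * (\<delta> * mass)))"
  proof (rule add_mono)
    show "\<kappa> * (\<delta> * mass) \<le> s ^ 2 * (\<delta> * mass)"
      using \<kappa>(2) s \<delta>_mass by (intro mult_right_mono) (auto simp: one_le_power order.trans)
    show "2 * s * (\<kappa> * x_offset) \<le> 2 * s * (14 * (s * (\<delta> * mass)))"
      using kappa_x_offset_le s unfolding s_def by (intro mult_left_mono) auto
  qed
  also have "\<dots> = (29 * s ^ 2 * \<delta>) * mass" by (simp add: power2_eq_square algebra_simps)
  also have "\<dots> \<le> (\<kappa> / 8) * mass"
  proof (rule mult_right_mono[OF _ mass_nonneg])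
    have "29 * s ^ 2 * \<delta> \<le> 32 * s ^ 4 * \<delta>"
      using s \<delta>(1) by (intro mult_right_mono mult_mono) (auto simp: power_increasing)
    then show "29 * s ^ 2 * \<delta> \<le> \<kappa> / 8" using \<delta>s by linarith
  qed
  finally have "\<kappa> * mass \<le> 0" by simp
  then show ?thesis using \<kappa>(1) mass_nonneg by (simp add: mult_le_0_iff)
qed

lemma kernel_vanishes: "b \<in> T \<Longrightarrow> c b = 0"
  using mass_eq_0 finite_T by (simp add: mass_def sum_nonneg_eq_0_iff)

end

end

section \<open>The clique complex and its ordering\<close>

lemma clique_complex_finite: "\<sigma> \<in> clique_complex G \<kappa> \<Longrightarrow> finite \<sigma>"
  unfolding clique_complex_def using finite_subset by blast

lemma clique_complex_subset: "\<sigma> \<in> clique_complex G \<kappa> \<Longrightarrow> \<tau> \<subseteq> \<sigma> \<Longrightarrow> \<tau> \<noteq> {} \<Longrightarrow> \<tau> \<in> clique_complex G \<kappa>"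
  unfolding clique_complex_def by blast

lemma clique_complex_vertex_less: "\<sigma> \<in> clique_complex G \<kappa> \<Longrightarrow> u \<in> \<sigma> \<Longrightarrow> u < dim_row G"
  unfolding clique_complex_def by auto

lemma clique_complex_dev_less:
  "\<sigma> \<in> clique_complex G \<kappa> \<Longrightarrow> u \<in> \<sigma> \<Longrightarrow> v \<in> \<sigma> \<Longrightarrow> u \<noteq> v \<Longrightarrow> cmod (G $$ (u, v) - 1) < \<kappa>"
  unfolding clique_complex_def adj_def by blast

lemma insert_Un_insert_in_clique_complex:
  assumes "insert v \<rho> \<in> clique_complex G \<kappa>" "insert w \<rho> \<in> clique_complex G \<kappa>"
    and "\<forall>a<dim_row G. \<forall>b<dim_row G. G $$ (a, b) = G $$ (b, a)" "cmod (G $$ (v, w) - 1) < \<kappa>"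
  shows "insert v \<rho> \<union> insert w \<rho> \<in> clique_complex G \<kappa>"
proof -
  have "G $$ (v, w) = G $$ (w, v)"
    using assms(3) clique_complex_vertex_less[OF assms(1), of v] clique_complex_vertex_less[OF assms(2), of w]
    by simp
  then show ?thesis using assms(1,2,4) unfolding clique_complex_def adj_def by auto
qed

lemma facets_subset_clique_complex:
  assumes "\<sigma> \<in> clique_complex G \<kappa>" "2 \<le> card \<sigma>"
  shows "facets \<sigma> \<subseteq> clique_complex G \<kappa>"
proof
  fix \<rho> assume "\<rho> \<in> facets \<sigma>"
  then obtain u where u: "u \<in> \<sigma>" "\<rho> = \<sigma> - {u}" unfolding facets_def by blast
  have "finite \<sigma>" using clique_complex_finite assms(1) by blast
  then have "card \<rho> = card \<sigma> - 1" using u by simp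
  then have "\<rho> \<noteq> {}" using assms(2) by auto
  then show "\<rho> \<in> clique_complex G \<kappa>" using clique_complex_subset[OF assms(1)] u by auto
qed

lemma
  assumes "strict_total_on A r"
  shows strict_total_on_irrefl: "\<not> r a a"
    and strict_total_on_trans: "r a b \<Longrightarrow> r b c \<Longrightarrow> r a c"
    and strict_total_on_total: "a \<in> A \<Longrightarrow> b \<in> A \<Longrightarrow> a \<noteq> b \<Longrightarrow> r a b \<or> r b a"
proof -
  show "\<not> r a a" using assms unfolding strict_total_on_def by blast
  show "r a b \<Longrightarrow> r b c \<Longrightarrow> r a c" using assms unfolding strict_total_on_def by blast
  show "a \<in> A \<Longrightarrow> b \<in> A \<Longrightarrow> a \<noteq> b \<Longrightarrow> r a b \<or> r b a" using assms unfolding strict_total_on_def by blast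
qed

lemma strict_total_on_asym:
  assumes "strict_total_on A r" "r a b"
  shows "\<not> r b a"
  using strict_total_on_irrefl[OF assms(1), of a] strict_total_on_trans[OF assms, of a] by blast

lemma strict_total_on_has_greatest:
  assumes "strict_total_on A r" "finite F" "F \<noteq> {}" "F \<subseteq> A"
  shows "\<exists>g\<in>F. \<forall>y\<in>F. y \<noteq> g \<longrightarrow> r g y"
  using assms(2-4)
proof (induction F rule: finite_ne_induct)
  case (singleton x)
  then show ?case by simp
next
  case (insert x F)
  then have F: "F \<subseteq> A" "x \<in> A" by auto
  obtain g where g: "g \<in> F" "\<And>y. y \<in> F \<Longrightarrow> y \<noteq> g \<Longrightarrow> r g y"
    using insert.IH[OF F(1)] by blast
  have "x \<noteq> g" using insert.hyps g(1) by blast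
  then consider "r x g" | "r g x"
    using strict_total_on_total[OF assms(1) F(2)] g(1) F(1) by blast
  then show ?case
  proof cases
    case 1
    have "r x y" if "y \<in> F" for y
      using 1 strict_total_on_trans[OF assms(1) 1 g(2)[OF that]] by (cases "y = g") simp_all
    then show ?thesis by blast
  next
    case 2
    then show ?thesis using g by blast
  qed
qed

lemma facets_eq_image: "facets \<sigma> = (\<lambda>u. \<sigma> - {u}) ` \<sigma>"
  unfolding facets_def by blast

lemma mu_greatest_facet:
  assumes "strict_total_on A succ" "finite \<sigma>" "\<sigma> \<noteq> {}" "facets \<sigma> \<subseteq> A"
  shows "mu succ \<sigma> \<in> facets \<sigma>" "\<And>\<rho>. \<rho> \<in> facets \<sigma> \<Longrightarrow> \<rho> \<noteq> mu succ \<sigma> \<Longrightarrow> succ (mu succ \<sigma>) \<rho>"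
proof -
  have "finite (facets \<sigma>)" "facets \<sigma> \<noteq> {}"
    using assms(2,3) by (simp_all add: facets_eq_image)
  then obtain g where g: "g \<in> facets \<sigma>" "\<forall>y\<in>facets \<sigma>. y \<noteq> g \<longrightarrow> succ g y"
    using strict_total_on_has_greatest[OF assms(1) _ _ assms(4)] by blast
  have "mu succ \<sigma> = g"
    unfolding mu_def
  proof (rule the_equality)
    show "g \<in> facets \<sigma> \<and> (\<forall>\<rho>\<in>facets \<sigma>. \<rho> \<noteq> g \<longrightarrow> succ g \<rho>)" using g by blast
  next
    fix \<rho> assume \<rho>: "\<rho> \<in> facets \<sigma> \<and> (\<forall>\<rho>'\<in>facets \<sigma>. \<rho>' \<noteq> \<rho> \<longrightarrow> succ \<rho> \<rho>')"
    show "\<rho> = g"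
    proof (rule ccontr)
      assume "\<rho> \<noteq> g"
      then have "succ \<rho> g" "succ g \<rho>" using \<rho> g by auto
      then show False using strict_total_on_asym[OF assms(1)] by blast
    qed
  qed
  then show "mu succ \<sigma> \<in> facets \<sigma>" "\<And>\<rho>. \<rho> \<in> facets \<sigma> \<Longrightarrow> \<rho> \<noteq> mu succ \<sigma> \<Longrightarrow> succ (mu succ \<sigma>) \<rho>"
    using g by auto
qed

lemma constructed_order_strict_total:
  "constructed_order G \<kappa> succ \<Longrightarrow> strict_total_on (clique_complex G \<kappa>) succ"
  unfolding constructed_order_def Let_def by (elim conjE)

lemma constructed_order_mu_mono:
  "constructed_order G \<kappa> succ \<Longrightarrow> \<sigma> \<in> clique_complex G \<kappa> \<Longrightarrow> \<tau> \<in> clique_complex G \<kappa> \<Longrightarrow>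
    card \<sigma> = card \<tau> \<Longrightarrow> 2 \<le> card \<sigma> \<Longrightarrow> succ (mu succ \<sigma>) (mu succ \<tau>) \<Longrightarrow> succ \<sigma> \<tau>"
  unfolding constructed_order_def Let_def by (elim conjE) blast

lemma constructed_order_greedy:
  "constructed_order G \<kappa> succ \<Longrightarrow> \<rho> \<in> clique_complex G \<kappa> \<Longrightarrow>
    \<exists>vs. greedy_seq G (Vset G \<kappa> succ \<rho>) vs \<and>
      (\<forall>i j. i < j \<longrightarrow> j < length vs \<longrightarrow> succ (insert (vs ! i) \<rho>) (insert (vs ! j) \<rho>))"
  unfolding constructed_order_def Let_def by (elim conjE) blast

lemma
  assumes "constructed_order G \<kappa> succ" "\<sigma> \<in> clique_complex G \<kappa>" "2 \<le> card \<sigma>"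
  shows mu_facet: "mu succ \<sigma> \<in> facets \<sigma>"
    and mu_greatest: "\<And>\<rho>. \<rho> \<in> facets \<sigma> \<Longrightarrow> \<rho> \<noteq> mu succ \<sigma> \<Longrightarrow> succ (mu succ \<sigma>) \<rho>"
proof -
  have "\<sigma> \<noteq> {}" using assms(3) by auto
  note greatest = mu_greatest_facet[OF constructed_order_strict_total[OF assms(1)]
      clique_complex_finite[OF assms(2)] this facets_subset_clique_complex[OF assms(2,3)]]
  show "mu succ \<sigma> \<in> facets \<sigma>" by (fact greatest)
  show "\<And>\<rho>. \<rho> \<in> facets \<sigma> \<Longrightarrow> \<rho> \<noteq> mu succ \<sigma> \<Longrightarrow> succ (mu succ \<sigma>) \<rho>" by (fact greatest)
qed

lemma Vset_iff:
  "u \<in> Vset G \<kappa> succ \<rho> \<longleftrightarrow> u \<notin> \<rho> \<and> insert u \<rho> \<in> clique_complex G \<kappa> \<and> mu succ (insert u \<rho>) = \<rho>"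
  by (simp add: Vset_def)

lemma mu_decomposition:
  assumes "constructed_order G \<kappa> succ" "\<sigma> \<in> clique_complex G \<kappa>" "2 \<le> card \<sigma>"
  obtains v where "v \<in> Vset G \<kappa> succ (mu succ \<sigma>)" "\<sigma> = insert v (mu succ \<sigma>)"
proof -
  obtain v where v: "v \<in> \<sigma>" "mu succ \<sigma> = \<sigma> - {v}"
    using mu_facet[OF assms] unfolding facets_def by blast
  then have "insert v (mu succ \<sigma>) = \<sigma>" by blast
  moreover have "v \<notin> mu succ \<sigma>" using v(2) by blast
  ultimately show ?thesis using assms(2) by (intro that[of v]) (simp_all add: Vset_iff)
qed

lemma Vset_mu:
  assumes co: "constructed_order G \<kappa> succ" and \<beta>: "\<beta> \<in> clique_complex G \<kappa>" "2 \<le> card \<beta>"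
    and u: "u \<in> Vset G \<kappa> succ \<beta>"
  shows "u \<in> Vset G \<kappa> succ (mu succ \<beta>)" and "succ \<beta> (insert u (mu succ \<beta>))"
proof -
  define \<alpha> where "\<alpha> = mu succ \<beta>"
  have st: "strict_total_on (clique_complex G \<kappa>) succ" using co by (rule constructed_order_strict_total)
  have u\<beta>: "u \<notin> \<beta>" "insert u \<beta> \<in> clique_complex G \<kappa>" "mu succ (insert u \<beta>) = \<beta>"
    using u by (auto simp: Vset_iff)
  obtain y where y: "y \<in> \<beta>" "\<alpha> = \<beta> - {y}"
    using mu_facet[OF co \<beta>] unfolding \<alpha>_def facets_def by blast
  have fin: "finite \<beta>" using \<beta>(1) by (rule clique_complex_finite)
  have u\<alpha>: "u \<notin> \<alpha>" using u\<beta>(1) y(2) by auto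
  have card_u\<beta>: "2 \<le> card (insert u \<beta>)" using \<beta>(2) u\<beta>(1) fin by simp
  have "insert u \<alpha> \<in> facets (insert u \<beta>)"
    unfolding facets_def using y u\<beta>(1) by (intro CollectI exI[of _ y]) auto
  moreover have "insert u \<alpha> \<noteq> mu succ (insert u \<beta>)" using u\<beta> by auto
  ultimately have "succ (mu succ (insert u \<beta>)) (insert u \<alpha>)"
    by (rule mu_greatest[OF co u\<beta>(2) card_u\<beta>])
  then show \<beta>_above: "succ \<beta> (insert u (mu succ \<beta>))"
    using u\<beta>(3) unfolding \<alpha>_def by simp
  have u\<alpha>_K: "insert u \<alpha> \<in> clique_complex G \<kappa>"
    using clique_complex_subset[OF u\<beta>(2), of "insert u \<alpha>"] y(2) by blast
  have card_u\<alpha>: "card (insert u \<alpha>) = card \<beta>"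
    using fin y u\<alpha> \<beta>(2) by (simp add: card_Diff_singleton)
  have "\<alpha> \<in> facets (insert u \<alpha>)"
    unfolding facets_def using u\<alpha> by (intro CollectI exI[of _ u]) auto
  have "mu succ (insert u \<alpha>) = \<alpha>"
  proof (rule ccontr)
    assume "mu succ (insert u \<alpha>) \<noteq> \<alpha>"
    then have "succ (mu succ (insert u \<alpha>)) \<alpha>"
      using mu_greatest[OF co u\<alpha>_K, of \<alpha>] card_u\<alpha> \<beta>(2) \<open>\<alpha> \<in> facets (insert u \<alpha>)\<close> by simp
    then have "succ (mu succ (insert u \<alpha>)) (mu succ \<beta>)" unfolding \<alpha>_def .
    then have "succ (insert u \<alpha>) \<beta>"
      using constructed_order_mu_mono[OF co u\<alpha>_K \<beta>(1) card_u\<alpha>] card_u\<alpha> \<beta>(2) by simp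
    then show False using strict_total_on_asym[OF st] \<beta>_above unfolding \<alpha>_def by blast
  qed
  then show "u \<in> Vset G \<kappa> succ (mu succ \<beta>)"
    using u\<alpha> u\<alpha>_K unfolding \<alpha>_def by (simp add: Vset_iff)
qed

lemma distinct_nth_notin_set_take:
  assumes "distinct vs" "j < length vs" "i \<le> j"
  shows "vs ! j \<notin> set (take i vs)"
proof
  assume "vs ! j \<in> set (take i vs)"
  then obtain k where "k < i" "k < length vs" "vs ! k = vs ! j"
    by (auto simp: in_set_conv_nth)
  then show False using nth_eq_iff_index_eq[OF assms(1,2)] assms(3) by (metis not_le)
qed

text \<open>At the step of the greedy enumeration of V_\<alpha> that lists x, the chosen pair (x, z) dominates
  all pairs of vertices not yet listed, and these include every p with insert x \<alpha> \<succ> insert p \<alpha>.\<close>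

lemma greedy_partner:
  assumes co: "constructed_order G \<kappa> succ" and \<alpha>: "\<alpha> \<in> clique_complex G \<kappa>"
    and x: "x \<in> Vset G \<kappa> succ \<alpha>"
    and q: "q \<in> Vset G \<kappa> succ \<alpha>" "succ (insert x \<alpha>) (insert q \<alpha>)"
  obtains z where "z \<in> Vset G \<kappa> succ \<alpha>" "z \<noteq> x"
    "\<And>a b. a \<in> insert x (insert z {p \<in> Vset G \<kappa> succ \<alpha>. succ (insert x \<alpha>) (insert p \<alpha>)}) \<Longrightarrow>
       b \<in> insert x (insert z {p \<in> Vset G \<kappa> succ \<alpha>. succ (insert x \<alpha>) (insert p \<alpha>)}) \<Longrightarrow>
       a \<noteq> b \<Longrightarrow> cmod (G $$ (a, b) - 1) \<le> cmod (G $$ (x, z) - 1)"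
proof -
  define V where "V = Vset G \<kappa> succ \<alpha>"
  have st: "strict_total_on (clique_complex G \<kappa>) succ" using co by (rule constructed_order_strict_total)
  obtain vs where gs: "greedy_seq G V vs"
    and ord: "\<And>i j. i < j \<Longrightarrow> j < length vs \<Longrightarrow> succ (insert (vs ! i) \<alpha>) (insert (vs ! j) \<alpha>)"
    using constructed_order_greedy[OF co \<alpha>] unfolding V_def by blast
  have dist: "distinct vs" and set_vs: "set vs = V" using gs unfolding greedy_seq_def by auto
  obtain i where i: "i < length vs" "vs ! i = x"
    using x set_vs unfolding V_def by (metis in_set_conv_nth)
  have later: "\<exists>j. i < j \<and> j < length vs \<and> vs ! j = p" if p: "p \<in> V" "succ (insert x \<alpha>) (insert p \<alpha>)" for p
  proof -
    obtain j where j: "j < length vs" "vs ! j = p" using p(1) set_vs by (metis in_set_conv_nth)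
    have "j \<noteq> i" using p(2) i j strict_total_on_irrefl[OF st] by metis
    moreover have "\<not> j < i" using ord[of j i] p(2) i j strict_total_on_asym[OF st] by metis
    ultimately show ?thesis using j by (intro exI[of _ j]) auto
  qed
  have "i + 1 < length vs" using later[OF q[folded V_def]] by auto
  define R where "R = V - set (take i vs)"
  obtain z where z: "z \<in> R" "z \<noteq> x" "\<And>w z'. w \<in> R \<Longrightarrow> z' \<in> R \<Longrightarrow> w \<noteq> z' \<Longrightarrow>
      cmod (G $$ (w, z') - 1) \<le> cmod (G $$ (x, z) - 1)"
    using gs \<open>i + 1 < length vs\<close> i(2) unfolding greedy_seq_def R_def Let_def by blast
  have "x \<in> R" unfolding R_def using x distinct_nth_notin_set_take[OF dist i(1) order.refl] i(2) V_def by simp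
  moreover have "p \<in> R" if "p \<in> V" "succ (insert x \<alpha>) (insert p \<alpha>)" for p
    using later[OF that] distinct_nth_notin_set_take[OF dist] that(1) unfolding R_def by fastforce
  ultimately show ?thesis using z R_def V_def by (intro that[of z]) blast+
qed

lemma fun_upd_enumeration:
  assumes "inj_on y {1..n}" "u \<notin> y ` {1..n}"
  shows "inj_on (y(Suc n := u)) {1..Suc n}"
    and "(y(Suc n := u)) ` {1..Suc n} = insert u (y ` {1..n})"
    and "j \<le> n \<Longrightarrow> (y(Suc n := u)) ` {1..j} = y ` {1..j}"
proof -
  have prefix: "(y(Suc n := u)) ` {1..j} = y ` {1..j}" if "j \<le> n" for j
    using that by (intro image_cong) auto
  then show "j \<le> n \<Longrightarrow> (y(Suc n := u)) ` {1..j} = y ` {1..j}" .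
  have Suc: "{1..Suc n} = insert (Suc n) {1..n}" by auto
  show "(y(Suc n := u)) ` {1..Suc n} = insert u (y ` {1..n})"
    unfolding Suc image_insert fun_upd_same prefix[OF order.refl] ..
  have "inj_on (y(Suc n := u)) {1..n}"
    using assms(1) by (rule inj_on_cong[THEN iffD1, rotated]) auto
  then show "inj_on (y(Suc n := u)) {1..Suc n}"
    using Suc prefix[of n] assms(2) by (simp del: fun_upd_image)
qed

lemma mu_chain_enumeration:
  assumes co: "constructed_order G \<kappa> succ"
  shows "\<rho> \<in> clique_complex G \<kappa> \<Longrightarrow> card \<rho> = r \<Longrightarrow>
    \<exists>x. inj_on x {1..r} \<and> x ` {1..r} = \<rho> \<and> (\<forall>j\<in>{2..r}. mu succ (x ` {1..j}) = x ` {1..j - 1})"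
proof (induction r arbitrary: \<rho>)
  case 0
  then show ?case using clique_complex_finite[OF 0(1)] by (simp add: clique_complex_def)
next
  case (Suc n)
  show ?case
  proof (cases "n = 0")
    case True
    then obtain u where "\<rho> = {u}" using Suc.prems(2) card_1_singletonE by auto
    then show ?thesis using True by (intro exI[of _ "\<lambda>_. u"]) auto
  next
    case False
    then have two: "2 \<le> card \<rho>" using Suc.prems(2) by simp
    obtain u where u: "u \<in> Vset G \<kappa> succ (mu succ \<rho>)" "\<rho> = insert u (mu succ \<rho>)"
      using mu_decomposition[OF co Suc.prems(1) two] .
    have u_notin: "u \<notin> mu succ \<rho>" using u(1) by (simp add: Vset_iff)
    have "mu succ \<rho> \<in> clique_complex G \<kappa>"
      using mu_facet[OF co Suc.prems(1) two] facets_subset_clique_complex[OF Suc.prems(1) two] by blast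
    moreover have "card (mu succ \<rho>) = n"
      using Suc.prems(2) u u_notin clique_complex_finite[OF Suc.prems(1)]
      by (metis card_insert_disjoint finite_insert nat.inject)
    ultimately obtain y where y: "inj_on y {1..n}" "y ` {1..n} = mu succ \<rho>"
      "\<forall>j\<in>{2..n}. mu succ (y ` {1..j}) = y ` {1..j - 1}"
      using Suc.IH by blast
    note x = fun_upd_enumeration[OF y(1), of u, unfolded y(2), OF u_notin]
    have image: "(y(Suc n := u)) ` {1..Suc n} = \<rho>" using x(2) y(2) u(2)[symmetric] by simp
    have "\<forall>j\<in>{2..Suc n}. mu succ ((y(Suc n := u)) ` {1..j}) = (y(Suc n := u)) ` {1..j - 1}"
    proof
      fix j assume j: "j \<in> {2..Suc n}"
      show "mu succ ((y(Suc n := u)) ` {1..j}) = (y(Suc n := u)) ` {1..j - 1}"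
      proof (cases "j = Suc n")
        case True
        then show ?thesis using image x(3)[of n] y(2) by simp
      next
        case False
        then have "j \<le> n" "j - 1 \<le> n" using j by auto
        then show ?thesis using j y(3) x(3) by simp
      qed
    qed
    then show ?thesis using x(1) image by blast
  qed
qed

lemma common_facet_decomposition:
  assumes co: "constructed_order G \<kappa> succ" and \<sigma>: "\<sigma> \<in> clique_complex G \<kappa>" and \<tau>: "\<tau> \<in> clique_complex G \<kappa>"
    and card: "card \<sigma> = r + 1" "card \<tau> = r + 1" and mu: "mu succ \<sigma> = mu succ \<tau>" and r: "1 \<le> r"
  obtains x v w where "inj_on x {1..r}" "\<forall>j\<in>{2..r}. mu succ (x ` {1..j}) = x ` {1..j - 1}"
    "v \<in> Vset G \<kappa> succ (x ` {1..r})" "\<sigma> = insert v (x ` {1..r})"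
    "w \<in> Vset G \<kappa> succ (x ` {1..r})" "\<tau> = insert w (x ` {1..r})"
proof -
  define \<rho> where "\<rho> = mu succ \<sigma>"
  have two: "2 \<le> card \<sigma>" "2 \<le> card \<tau>" using card r by auto
  obtain v where v: "v \<in> Vset G \<kappa> succ \<rho>" "\<sigma> = insert v \<rho>"
    by (rule mu_decomposition[OF co \<sigma> two(1), folded \<rho>_def])
  obtain w where w: "w \<in> Vset G \<kappa> succ \<rho>" "\<tau> = insert w \<rho>"
    by (rule mu_decomposition[OF co \<tau> two(2), folded mu, folded \<rho>_def])
  have "card \<rho> = r"
    using v card(1) clique_complex_finite[OF \<sigma>] by (simp add: Vset_iff)
  moreover from this have "\<rho> \<in> clique_complex G \<kappa>"
    using clique_complex_subset[OF \<sigma>] v(2) r by fastforce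
  ultimately obtain x where "inj_on x {1..r}" "x ` {1..r} = \<rho>"
    "\<forall>j\<in>{2..r}. mu succ (x ` {1..j}) = x ` {1..j - 1}"
    using mu_chain_enumeration[OF co] by blast
  then show ?thesis using that v w by blast
qed

section \<open>Two simplices with a common largest facet\<close>

locale common_facet_pair =
  fixes G :: "complex mat" and m :: nat and \<kappa> \<delta> :: real and succ :: "nat set \<Rightarrow> nat set \<Rightarrow> bool"
    and r :: nat and x :: "nat \<Rightarrow> nat" and v w :: nat
  assumes G: "G \<in> carrier_mat m m"
    and sym: "\<And>a b. a < m \<Longrightarrow> b < m \<Longrightarrow> G $$ (a, b) = G $$ (b, a)"
    and diag: "\<And>a. a < m \<Longrightarrow> G $$ (a, a) = 1"
    and \<kappa>: "0 < \<kappa>" "\<kappa> \<le> 1" and \<delta>: "0 \<le> \<delta>" "\<delta> * 2 ^ (4 * r + 4) \<le> \<kappa>"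
    and gap: "\<And>a b. a < m \<Longrightarrow> b < m \<Longrightarrow> \<kappa> < cmod (G $$ (a, b) - 1) \<or> cmod (G $$ (a, b) - 1) < \<delta>"
    and co: "constructed_order G \<kappa> succ"
    and r: "1 \<le> r" and x_inj: "inj_on x {1..r}"
    and x_chain: "\<And>j. j \<in> {2..r} \<Longrightarrow> mu succ (x ` {1..j}) = x ` {1..j - 1}"
    and v: "v \<in> Vset G \<kappa> succ (x ` {1..r})" and w: "w \<in> Vset G \<kappa> succ (x ` {1..r})"
    and far: "\<kappa> \<le> cmod (G $$ (v, w) - 1)"
begin

abbreviation "dev a b \<equiv> cmod (G $$ (a, b) - 1)"
abbreviation "face j \<equiv> x ` {1..j}"

lemma vertex_less: "\<sigma> \<in> clique_complex G \<kappa> \<Longrightarrow> a \<in> \<sigma> \<Longrightarrow> a < m"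
  using clique_complex_vertex_less G by fastforce

lemma dev_diag: "a < m \<Longrightarrow> dev a a \<le> \<delta>"
  using diag \<delta>(1) by simp

lemma dev_in_simplex:
  assumes "\<sigma> \<in> clique_complex G \<kappa>" "a \<in> \<sigma>" "b \<in> \<sigma>"
  shows "dev a b \<le> \<delta>"
proof (cases "a = b")
  case True
  then show ?thesis using dev_diag vertex_less assms by blast
next
  case False
  then have "dev a b < \<kappa>" using clique_complex_dev_less[OF assms] by blast
  then show ?thesis using gap[OF vertex_less[OF assms(1,2)] vertex_less[OF assms(1,3)]] by linarith
qed

lemma apex_simplices: "insert v (face r) \<in> clique_complex G \<kappa>" "insert w (face r) \<in> clique_complex G \<kappa>"
  using v w by (simp_all add: Vset_iff)

lemma apex_notin: "v \<notin> face r" "w \<notin> face r"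
  using v w by (simp_all add: Vset_iff)

lemma face_in_clique_complex: "j \<in> {1..r} \<Longrightarrow> face j \<in> clique_complex G \<kappa>"
  by (rule clique_complex_subset[OF apex_simplices(1)]) auto

lemma face_step: "j \<in> {2..r} \<Longrightarrow> face j = insert (x j) (face (j - 1)) \<and> x j \<notin> face (j - 1)"
proof -
  assume j: "j \<in> {2..r}"
  then have "{1..j} = insert j {1..j - 1}" by auto
  moreover have "x j \<notin> face (j - 1)"
    using j inj_onD[OF x_inj] by fastforce
  ultimately show ?thesis by simp
qed

lemma card_face: "j \<in> {1..r} \<Longrightarrow> card (face j) = j"
  using inj_on_subset[OF x_inj] by (simp add: card_image)

lemma x_in_Vset: "j \<in> {2..r} \<Longrightarrow> x j \<in> Vset G \<kappa> succ (face (j - 1))"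
  using face_step[of j] face_in_clique_complex[of j] x_chain[of j] by (simp add: Vset_iff)

lemma Vset_face_step:
  assumes "k \<in> {2..r}" "u \<in> Vset G \<kappa> succ (face k)"
  shows "u \<in> Vset G \<kappa> succ (face (k - 1))" "succ (insert (x k) (face (k - 1))) (insert u (face (k - 1)))"
proof -
  have "face k \<in> clique_complex G \<kappa>" "2 \<le> card (face k)"
    using assms(1) face_in_clique_complex card_face by auto
  note step = Vset_mu[OF co this assms(2)]
  show "u \<in> Vset G \<kappa> succ (face (k - 1))" using step(1) x_chain[OF assms(1)] by simp
  show "succ (insert (x k) (face (k - 1))) (insert u (face (k - 1)))"
    using step(2) x_chain[OF assms(1)] face_step[OF assms(1)] by simp
qed

lemma Vset_face_mono:
  assumes "u \<in> Vset G \<kappa> succ (face j)" "1 \<le> i" "i \<le> j" "j \<le> r"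
  shows "u \<in> Vset G \<kappa> succ (face i)"
  using assms(3,1)
proof (induction i rule: inc_induct)
  case (step n)
  then show ?case using Vset_face_step(1)[of "Suc n"] assms(2,4) by simp
qed

lemma apex_in_Vset: "j \<in> {1..r} \<Longrightarrow> v \<in> Vset G \<kappa> succ (face j)" "j \<in> {1..r} \<Longrightarrow> w \<in> Vset G \<kappa> succ (face j)"
  using Vset_face_mono v w by auto

definition partner :: "nat \<Rightarrow> nat" where
  "partner k = (SOME z. z \<in> Vset G \<kappa> succ (face (k - 1)) \<and> z \<noteq> x k \<and>
     (\<forall>a \<in> insert (x k) (insert z (Vset G \<kappa> succ (face k))).
        \<forall>b \<in> insert (x k) (insert z (Vset G \<kappa> succ (face k))). a \<noteq> b \<longrightarrow> dev a b \<le> dev (x k) z))"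

definition pivot :: "nat \<Rightarrow> real" where
  "pivot k = dev (x k) (partner k)"

lemma partner:
  assumes k: "k \<in> {2..r}"
  shows "partner k \<in> Vset G \<kappa> succ (face (k - 1))" "partner k \<noteq> x k"
    and pivot_dominates: "\<And>a b. a \<in> insert (x k) (insert (partner k) (Vset G \<kappa> succ (face k))) \<Longrightarrow>
      b \<in> insert (x k) (insert (partner k) (Vset G \<kappa> succ (face k))) \<Longrightarrow> a \<noteq> b \<Longrightarrow> dev a b \<le> pivot k"
proof -
  have k1: "k - 1 \<in> {1..r}" using k by auto
  have "succ (insert (x k) (face (k - 1))) (insert v (face (k - 1)))"
    using Vset_face_step(2)[OF k apex_in_Vset(1)] k by simp
  then obtain z where z: "z \<in> Vset G \<kappa> succ (face (k - 1))" "z \<noteq> x k"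
    "\<And>a b. a \<in> insert (x k) (insert z {p \<in> Vset G \<kappa> succ (face (k - 1)). succ (insert (x k) (face (k - 1))) (insert p (face (k - 1)))}) \<Longrightarrow>
       b \<in> insert (x k) (insert z {p \<in> Vset G \<kappa> succ (face (k - 1)). succ (insert (x k) (face (k - 1))) (insert p (face (k - 1)))}) \<Longrightarrow>
       a \<noteq> b \<Longrightarrow> dev a b \<le> dev (x k) z"
    using greedy_partner[OF co face_in_clique_complex[OF k1] x_in_Vset[OF k] apex_in_Vset(1)[OF k1]] by blast
  have "Vset G \<kappa> succ (face k) \<subseteq>
      {p \<in> Vset G \<kappa> succ (face (k - 1)). succ (insert (x k) (face (k - 1))) (insert p (face (k - 1)))}"
    using Vset_face_step[OF k] by blast
  then have "\<exists>z. z \<in> Vset G \<kappa> succ (face (k - 1)) \<and> z \<noteq> x k \<and>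
     (\<forall>a \<in> insert (x k) (insert z (Vset G \<kappa> succ (face k))).
        \<forall>b \<in> insert (x k) (insert z (Vset G \<kappa> succ (face k))). a \<noteq> b \<longrightarrow> dev a b \<le> dev (x k) z)"
    using z by (intro exI[of _ z]) blast
  from someI_ex[OF this] show "partner k \<in> Vset G \<kappa> succ (face (k - 1))" "partner k \<noteq> x k"
    "\<And>a b. a \<in> insert (x k) (insert (partner k) (Vset G \<kappa> succ (face k))) \<Longrightarrow>
      b \<in> insert (x k) (insert (partner k) (Vset G \<kappa> succ (face k))) \<Longrightarrow> a \<noteq> b \<Longrightarrow> dev a b \<le> pivot k"
    unfolding partner_def[symmetric] pivot_def by blast+
qed

lemma partner_simplex:
  "k \<in> {2..r} \<Longrightarrow> insert (partner k) (face (k - 1)) \<in> clique_complex G \<kappa> \<and> partner k \<notin> face (k - 1)"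
  using partner(1) by (simp add: Vset_iff)

lemma apex_distinct: "v \<noteq> w"
  using far diag[OF vertex_less[OF apex_simplices(1), of v]] \<kappa>(1) by force

lemma kappa_le_pivot: "k \<in> {2..r} \<Longrightarrow> \<kappa> \<le> pivot k"
  using pivot_dominates[of k v w] apex_in_Vset[of k] apex_distinct far by force

lemma vertices_less:
  shows "j \<in> {1..r} \<Longrightarrow> x j < m" and "k \<in> {2..r} \<Longrightarrow> partner k < m" and "v < m" and "w < m"
proof -
  show "j \<in> {1..r} \<Longrightarrow> x j < m" using vertex_less[OF apex_simplices(1), of "x j"] by simp
  show "k \<in> {2..r} \<Longrightarrow> partner k < m" using vertex_less[OF conjunct1[OF partner_simplex]] by simp
  show "v < m" "w < m"
    using vertex_less[OF apex_simplices(1), of v] vertex_less[OF apex_simplices(2), of w] by simp_all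
qed

lemma later_in_Vset:
  assumes "j \<in> {2..r}" "1 \<le> k" "k < j"
  shows "x j \<in> Vset G \<kappa> succ (face k)" "partner j \<in> Vset G \<kappa> succ (face k)"
  using Vset_face_mono[OF x_in_Vset[OF assms(1)]] Vset_face_mono[OF partner(1)[OF assms(1)]] assms by auto

lemma small_or_le_pivot:
  assumes "k \<in> {2..r}" "a \<in> insert (x k) (insert (partner k) (Vset G \<kappa> succ (face k)))"
    "b \<in> insert (x k) (insert (partner k) (Vset G \<kappa> succ (face k)))" "a < m"
  shows "dev a b \<le> \<delta> \<or> dev a b \<le> pivot k"
  using dev_diag[OF assms(4)] pivot_dominates[OF assms(1-3)] by (cases "a = b") auto

lemma row_x1: "b \<in> pivot_vertices x partner v w r \<Longrightarrow> dev (x 1) b \<le> \<delta>"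
proof (erule pivot_verticesE)
  fix l assume l: "l \<in> {2..r}" "b = partner l"
  then show ?thesis using dev_in_simplex[OF conjunct1[OF partner_simplex[OF l(1)]]] by auto
qed (use dev_in_simplex[OF apex_simplices(1)] dev_in_simplex[OF apex_simplices(2)] r in auto)

lemma row_x:
  assumes k: "k \<in> {2..r}" and b: "b \<in> pivot_vertices x partner v w r - {partner k}"
  shows "dev (x k) b \<le> \<delta> \<or> (\<exists>l\<in>{2..<k}. b = partner l \<and> dev (x k) b \<le> pivot l)"
proof -
  have "b \<in> pivot_vertices x partner v w r" using b by blast
  then show ?thesis
  proof (cases rule: pivot_verticesE)
    case (2 l)
    show ?thesis
    proof (cases "k < l")
      case True
      then show ?thesis using dev_in_simplex[OF conjunct1[OF partner_simplex[OF 2(1)]]] k 2 by auto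
    next
      case False
      then have "l < k" using b 2 by (cases "l = k") auto
      then have "x k \<in> Vset G \<kappa> succ (face l)" using later_in_Vset(1)[OF k] 2(1) by simp
      then show ?thesis
        using small_or_le_pivot[OF 2(1), of "x k" b] 2 \<open>l < k\<close> vertices_less(1) k by auto
    qed
  qed (use dev_in_simplex[OF apex_simplices(1)] dev_in_simplex[OF apex_simplices(2)] k in auto)
qed

lemma row_apex:
  assumes u: "u \<in> {v, w}" and b: "b \<in> pivot_vertices x partner v w r - ({v, w} - {u})"
  shows "dev u b \<le> \<delta> \<or> (\<exists>l\<in>{2..r}. b = partner l \<and> dev u b \<le> pivot l)"
proof -
  have u_simplex: "insert u (face r) \<in> clique_complex G \<kappa>" using u apex_simplices by blast
  have "b \<in> pivot_vertices x partner v w r" using b by blast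
  then show ?thesis
  proof (cases rule: pivot_verticesE)
    case (2 l)
    then have "u \<in> Vset G \<kappa> succ (face l)" using u apex_in_Vset by auto
    then show ?thesis using small_or_le_pivot[OF 2(1), of u b] 2 u vertices_less by auto
  qed (use dev_in_simplex[OF u_simplex] b u dev_diag vertices_less in auto)
qed

lemma row_z:
  assumes k: "k \<in> {2..r}" and b: "b \<in> pivot_vertices x partner v w r - {x k}"
  shows "dev (partner k) b \<le> \<delta> \<or>
      (b \<in> x ` {k<..r} \<union> partner ` {k<..r} \<union> {v, w} \<and> dev (partner k) b \<le> pivot k) \<or>
      (\<exists>l\<in>{2..<k}. b = partner l \<and> dev (partner k) b \<le> pivot l)"
proof -
  have zk: "partner k < m" using vertices_less(2)[OF k] .
  have "b \<in> pivot_vertices x partner v w r" using b by blast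
  then show ?thesis
  proof (cases rule: pivot_verticesE)
    case (1 j)
    show ?thesis
    proof (cases "j < k")
      case True
      then show ?thesis using dev_in_simplex[OF conjunct1[OF partner_simplex[OF k]]] 1 by auto
    next
      case False
      then have "k < j" using b 1 by (cases "j = k") auto
      then have "x j \<in> Vset G \<kappa> succ (face k)" using later_in_Vset(1)[of j k] 1(1) k by simp
      then show ?thesis using small_or_le_pivot[OF k, of "partner k" b] 1 \<open>k < j\<close> zk by auto
    qed
  next
    case (2 l)
    consider "l = k" | "k < l" | "l < k" by linarith
    then show ?thesis
    proof cases
      case 1
      then show ?thesis using dev_diag[OF zk] 2 by simp
    next
      case 3: 2
      then have "partner l \<in> Vset G \<kappa> succ (face k)" using later_in_Vset(2)[OF 2(1)] k by simp
      then show ?thesis using small_or_le_pivot[OF k, of "partner k" b] 2 3 zk by auto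
    next
      case 3
      then have "partner k \<in> Vset G \<kappa> succ (face l)" using later_in_Vset(2)[OF k] 2(1) by simp
      then show ?thesis using small_or_le_pivot[OF 2(1), of "partner k" b] 2 3 zk by auto
    qed
  next
    case 3
    then show ?thesis using small_or_le_pivot[OF k, of "partner k" v] apex_in_Vset(1)[of k] k zk by auto
  next
    case 4
    then show ?thesis using small_or_le_pivot[OF k, of "partner k" w] apex_in_Vset(2)[of k] k zk by auto
  qed
qed

lemma partner_not_in_simplex:
  assumes "k \<in> {2..r}" "\<sigma> \<in> clique_complex G \<kappa>" "x k \<in> \<sigma>" "b \<in> \<sigma>" "b \<noteq> x k"
  shows "b \<noteq> partner k"
  using clique_complex_dev_less[OF assms(2,3,4)] assms(5) kappa_le_pivot[OF assms(1)]
  unfolding pivot_def by force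

lemma partner_inj: "inj_on partner {2..r}"
proof -
  have "partner k \<noteq> partner l" if "k \<in> {2..r}" "l \<in> {2..r}" "k < l" for k l
  proof -
    have xk: "x k \<in> face (l - 1)" using that by (intro imageI) auto
    then have "partner l \<noteq> x k" using partner_simplex[OF that(2)] by auto
    then have "partner l \<noteq> partner k"
      using partner_not_in_simplex[OF that(1) conjunct1[OF partner_simplex[OF that(2)]]] xk by simp
    then show ?thesis by simp
  qed
  then show ?thesis unfolding inj_on_def by (metis linorder_neqE_nat)
qed

lemma x_ne_partner: "j \<in> {1..r} \<Longrightarrow> k \<in> {2..r} \<Longrightarrow> x j \<noteq> partner k"
proof -
  assume j: "j \<in> {1..r}" and k: "k \<in> {2..r}"
  consider "j < k" | "j = k" | "k < j" by linarith
  then show ?thesis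
  proof cases
    case 1
    then have "x j \<in> face (k - 1)" using j by (intro imageI) auto
    then show ?thesis using partner_simplex[OF k] by auto
  next
    case 2
    then show ?thesis using partner(2)[OF k] by simp
  next
    case 3
    then have "x j \<noteq> x k" using inj_onD[OF x_inj] j k by fastforce
    then show ?thesis using partner_not_in_simplex[OF k face_in_clique_complex, of r "x j"] j k r by auto
  qed
qed

lemma apex_ne_partner: "u \<in> {v, w} \<Longrightarrow> k \<in> {2..r} \<Longrightarrow> u \<noteq> partner k"
proof -
  assume u: "u \<in> {v, w}" and k: "k \<in> {2..r}"
  then have "insert u (face r) \<in> clique_complex G \<kappa>" "u \<noteq> x k"
    using apex_simplices apex_notin by auto
  then show ?thesis using partner_not_in_simplex[OF k] k by auto
qed

lemma card_pivot_vertices: "card (pivot_vertices x partner v w r) = 2 * r + 1"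
proof -
  have "x ` {1..r} \<inter> partner ` {2..r} = {}" using x_ne_partner by blast
  then have "card (x ` {1..r} \<union> partner ` {2..r}) = card (x ` {1..r}) + card (partner ` {2..r})"
    by (intro card_Un_disjoint) auto
  also have "\<dots> = r + (r - 1)" using card_face[of r] r card_image[OF partner_inj] by simp
  finally have "card (x ` {1..r} \<union> partner ` {2..r}) = r + (r - 1)" .
  moreover have "(x ` {1..r} \<union> partner ` {2..r}) \<inter> {v, w} = {}"
    using apex_notin apex_ne_partner by blast
  ultimately show ?thesis
    unfolding pivot_vertices_def using apex_distinct r by (subst card_Un_disjoint) auto
qed

lemma pivot_xz: "k \<in> {2..r} \<Longrightarrow>
    \<kappa> \<le> pivot k \<and> pivot k \<le> dev (x k) (partner k) \<and> pivot k \<le> dev (partner k) (x k)"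
  using kappa_le_pivot sym vertices_less unfolding pivot_def by simp

sublocale pivot_pattern "\<lambda>a b. G $$ (a, b)" x partner v w pivot \<kappa> \<delta> r
proof unfold_locales
  show "\<kappa> \<le> dev v w" "\<kappa> \<le> dev w v" using far sym vertices_less by simp_all
  show "\<And>b. b \<in> pivot_vertices x partner v w r - {w} \<Longrightarrow>
      dev v b \<le> \<delta> \<or> (\<exists>l\<in>{2..r}. b = partner l \<and> dev v b \<le> pivot l)"
    using row_apex[of v] apex_distinct by auto
  show "\<And>b. b \<in> pivot_vertices x partner v w r - {v} \<Longrightarrow>
      dev w b \<le> \<delta> \<or> (\<exists>l\<in>{2..r}. b = partner l \<and> dev w b \<le> pivot l)"
    using row_apex[of w] apex_distinct by auto
qed (use r \<kappa> \<delta> pivot_xz row_x1 row_x row_z in auto)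

theorem rank_ge: "2 * r + 1 \<le> vec_space.rank m G"
proof (rule ccontr)
  assume "\<not> 2 * r + 1 \<le> vec_space.rank m G"
  then have "vec_space.rank m G < card (pivot_vertices x partner v w r)"
    using card_pivot_vertices by simp
  moreover have T_less: "pivot_vertices x partner v w r \<subseteq> {..<m}"
    using vertices_less by (auto elim: pivot_verticesE)
  ultimately obtain c where c: "\<exists>b\<in>pivot_vertices x partner v w r. c b \<noteq> 0"
    "\<And>a. a < m \<Longrightarrow> (\<Sum>b\<in>pivot_vertices x partner v w r. G $$ (a, b) * c b) = 0"
    using rank_lt_card_imp_kernel_vector[OF G] by blast
  have "c b = 0" if "b \<in> pivot_vertices x partner v w r" for b
    using kernel_vanishes[of c b] c(2) T_less that by auto
  then show False using c(1) by blast
qed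

end

theorem lemma10:
  fixes G :: "complex mat" and m r :: nat and \<kappa> :: real
    and succ :: "nat set \<Rightarrow> nat set \<Rightarrow> bool"
  assumes "G \<in> carrier_mat m m"
    and "\<forall>u<m. \<forall>v<m. G $$ (u,v) = G $$ (v,u)"
    and "\<forall>u<m. G $$ (u,u) = 1"
    and "vec_space.rank m G \<le> 2 * r"
    and "0 < \<kappa>" and "\<kappa> < 1"
    and "\<forall>u<m. \<forall>v<m. cmod (G $$ (u,v) - 1) > \<kappa> \<or>
                      cmod (G $$ (u,v) - 1) < 2 powr (- 4 * (real r + 1)) * \<kappa>"
    and "constructed_order G \<kappa> succ"
    and "\<sigma> \<in> clique_complex G \<kappa>" and "\<tau> \<in> clique_complex G \<kappa>"
    and "card \<sigma> = r + 1" and "card \<tau> = r + 1"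
    and "mu succ \<sigma> = mu succ \<tau>"
  shows "\<sigma> \<union> \<tau> \<in> clique_complex G \<kappa>"
proof (cases "r = 0")
  case True
  obtain u where "u \<in> \<sigma>" using assms(11) by fastforce
  then have "u < m" using clique_complex_vertex_less[OF assms(9)] assms(1) by fastforce
  then show ?thesis using rank_pos_if_diag_one[OF assms(1)] assms(3,4) True by fastforce
next
  case False
  then have "1 \<le> r" by simp
  obtain x v w where x: "inj_on x {1..r}" "\<forall>j\<in>{2..r}. mu succ (x ` {1..j}) = x ` {1..j - 1}"
    and v: "v \<in> Vset G \<kappa> succ (x ` {1..r})" "\<sigma> = insert v (x ` {1..r})"
    and w: "w \<in> Vset G \<kappa> succ (x ` {1..r})" "\<tau> = insert w (x ` {1..r})"
    by (rule common_facet_decomposition[OF assms(8-13) \<open>1 \<le> r\<close>])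
  define \<delta> where "\<delta> = 2 powr (- 4 * (real r + 1)) * \<kappa>"
  have \<delta>: "0 \<le> \<delta>" "\<delta> * 2 ^ (4 * r + 4) \<le> \<kappa>"
    unfolding \<delta>_def using assms(5) by (simp_all add: powr_realpow[symmetric] powr_add[symmetric] algebra_simps)
  show ?thesis
  proof (rule ccontr)
    assume "\<sigma> \<union> \<tau> \<notin> clique_complex G \<kappa>"
    then have "\<kappa> \<le> cmod (G $$ (v, w) - 1)"
      using insert_Un_insert_in_clique_complex[of v "x ` {1..r}" G \<kappa> w] assms(1,2,9,10) v(2) w(2)
      by fastforce
    then interpret common_facet_pair G m \<kappa> \<delta> succ r x v w
      using assms(1-3,5-8) \<delta> x v(1) w(1) False unfolding \<delta>_def by unfold_locales auto
    show False using rank_ge assms(4) by linarith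
  qed
qed

end
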